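(* Let $m\in(1,2]$ and $U\in C^3(\mathbb{R}^d)$ such that there exists $A_1\ge0$ with $\|D^kU(q)\|\le A_1(\|q\|+1)^{m-k}$ for all $q$ and $k=2,3$, and there exist $A_2>0$, $R\ge0$ with $D^2U(q)\{\nabla U(q)\otimes\nabla U(q)\}\ge A_2\|q\|^{3m-4}$ for all $\|q\|\ge R$. Then there exist $R_0\ge0$ and $\delta,\eta>0$ such that for all $q,x,z\in\mathbb{R}^d$ with $\|q\|\ge R_0$ and $\max(\|q-x\|,\|q-z\|)\le\delta\|q\|$, $$D^2U(q)\{\nabla U(x)\otimes\nabla U(z)\}\ge\eta\|q\|^{3m-4}.$$
   Context: $D^kU$ is the $k$-th differential with operator norm; $D^2U(q)\{a\otimes b\}=\langle a,\nabla^2U(q)b\rangle$. *)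

theory Defs
  imports "HOL-Analysis.Analysis"
begin

end

theory Submission
  imports Defs "HOL-Analysis.Analysis"
begin

text \<open>
  The growth bound on the Hessian makes the gradient grow like |q|^(m-1) and be Lipschitz
  with constant of order |q|^(m-2) on the ball of radius |q|/2 around q. Replacing grad U(q) by
  grad U(x) and grad U(z) in the quadratic form of the Hessian at q therefore costs at most a
  constant times delta |q| |q|^(m-2) |q|^(m-2) |q|^(m-1) = delta |q|^(3m-4), which is absorbed by
  half of the lower bound once delta is small.
\<close>

lemma growth_of_derivative_bound:
  fixes G :: "'a::real_normed_vector \<Rightarrow> 'b::euclidean_space" and H :: "'a \<Rightarrow> ('a \<Rightarrow>\<^sub>L 'b)"
  assumes deriv: "\<And>q. (G has_derivative blinfun_apply (H q)) (at q)"
    and m: "1 < m" and A: "A \<ge> 0"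
    and bound: "\<And>q. norm (H q) \<le> A * (norm q + 1) powr (m - 2)"
  shows "norm (G q) \<le> (norm (G 0) + A / (m - 1)) * (norm q + 1) powr (m - 1)"
proof -
  define N where "N = norm q"
  have N0: "N \<ge> 0" by (simp add: N_def)
  have ray: "((\<lambda>t. G (t *\<^sub>R q)) has_vector_derivative (H (t *\<^sub>R q) q)) (at t within {0..1})" for t
  proof -
    have "((\<lambda>t. t *\<^sub>R q) has_derivative (\<lambda>h. h *\<^sub>R q)) (at t within {0..1})"
      by (auto intro!: derivative_eq_intros)
    from has_derivative_in_compose[OF this has_derivative_at_withinI[OF deriv]]
    show ?thesis unfolding has_vector_derivative_def by (simp add: blinfun.scaleR_right)
  qed
  define g where "g t = A / (m - 1) * (t * N + 1) powr (m - 1)" for t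
  have majorant: "(g has_vector_derivative (A * (t * N + 1) powr (m - 2) * N)) (at t within {0..1})"
    if "t \<in> {0..1}" for t
  proof -
    have pos: "t * N + 1 > 0" using that N0 by (auto intro: add_nonneg_pos)
    have "(g has_real_derivative (A / (m - 1) * ((m - 1) * (t * N + 1) powr (m - 1 - 1) * N)))
            (at t within {0..1})"
      unfolding g_def using pos by (auto intro!: derivative_eq_intros DERIV_powr)
    moreover have "A / (m - 1) * ((m - 1) * (t * N + 1) powr (m - 1 - 1) * N)
                     = A * (t * N + 1) powr (m - 2) * N"
      using m by (simp add: field_simps)
    ultimately show ?thesis by (simp add: has_real_derivative_iff_has_vector_derivative)
  qed
  have int_G: "((\<lambda>t. H (t *\<^sub>R q) q) has_integral G q - G 0) {0..1}"
    using fundamental_theorem_of_calculus[of 0 1 "\<lambda>t. G (t *\<^sub>R q)", OF _ ray] by simp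
  have int_g: "((\<lambda>t. A * (t * N + 1) powr (m - 2) * N) has_integral g 1 - g 0) {0..1}"
    using fundamental_theorem_of_calculus[of 0 1 g, OF _ majorant] by simp
  have "norm (H (t *\<^sub>R q) q) \<le> A * (t * N + 1) powr (m - 2) * N" if "t \<in> {0..1}" for t
  proof -
    have "norm (H (t *\<^sub>R q) q) \<le> norm (H (t *\<^sub>R q)) * N" by (simp add: N_def norm_blinfun)
    also have "\<dots> \<le> A * (norm (t *\<^sub>R q) + 1) powr (m - 2) * N"
      by (rule mult_right_mono[OF bound N0])
    also have "norm (t *\<^sub>R q) = t * N" using that by (simp add: N_def)
    finally show ?thesis .
  qed
  then have "norm (G q - G 0) \<le> g 1 - g 0"
    using has_integral_norm_bound_integral_component[OF int_G int_g, of 1] by simp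
  also have "\<dots> \<le> A / (m - 1) * (N + 1) powr (m - 1)"
    using m A by (simp add: g_def)
  finally have "norm (G q) \<le> norm (G 0) + A / (m - 1) * (N + 1) powr (m - 1)"
    by (smt (verit) norm_triangle_ineq2)
  moreover have "norm (G 0) \<le> norm (G 0) * (N + 1) powr (m - 1)"
    using N0 m by (simp add: ge_one_powr_ge_zero mult_le_cancel_left1)
  ultimately show ?thesis by (simp add: N_def distrib_right)
qed

lemma powr_norm_add_one_le_near:
  fixes q y :: "'a::real_normed_vector"
  assumes near: "norm (y - q) \<le> norm q / 2" and p: "-1 \<le> p" "p \<le> 0"
  shows "(norm y + 1) powr p \<le> 2 * (norm q + 1) powr p"
proof -
  have "norm y \<ge> norm q / 2"
    using near norm_triangle_ineq2[of q y] norm_minus_commute[of q y] by linarith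
  then have "(norm y + 1) powr p \<le> ((norm q + 1) / 2) powr p"
    using p by (intro powr_mono2') (auto intro: add_nonneg_pos)
  also have "\<dots> = (norm q + 1) powr p / 2 powr p"
    by (simp add: powr_divide)
  also have "\<dots> \<le> (norm q + 1) powr p / (1 / 2)"
  proof (rule divide_left_mono)
    have "2 powr (-1) \<le> (2::real) powr p" using p by (intro powr_mono) auto
    then show "1 / 2 \<le> (2::real) powr p" by (simp add: powr_minus)
  qed auto
  finally show ?thesis by simp
qed

lemma lipschitz_near_of_derivative_bound:
  fixes G :: "'a::real_normed_vector \<Rightarrow> 'b::real_normed_vector" and H :: "'a \<Rightarrow> ('a \<Rightarrow>\<^sub>L 'b)"
  assumes deriv: "\<And>q. (G has_derivative blinfun_apply (H q)) (at q)"
    and A: "A \<ge> 0" and p: "-1 \<le> p" "p \<le> 0"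
    and bound: "\<And>q. norm (H q) \<le> A * (norm q + 1) powr p"
    and near: "norm (x - q) \<le> norm q / 2"
  shows "norm (G x - G q) \<le> 2 * A * (norm q + 1) powr p * norm (x - q)"
proof (rule differentiable_bound[of "closed_segment q x"])
  fix y assume y: "y \<in> closed_segment q x"
  show "(G has_derivative blinfun_apply (H y)) (at y within closed_segment q x)"
    using deriv has_derivative_at_withinI by blast
  have "norm (y - q) \<le> norm q / 2" using segment_bound(1)[OF y] near by simp
  then have "A * (norm y + 1) powr p \<le> A * (2 * (norm q + 1) powr p)"
    by (intro mult_left_mono powr_norm_add_one_le_near p A)
  then show "onorm (blinfun_apply (H y)) \<le> 2 * A * (norm q + 1) powr p"
    using bound[of y] by (simp add: norm_blinfun.rep_eq[symmetric])
qed auto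

lemma inner_blinfun_perturbation:
  fixes L :: "'a::real_inner \<Rightarrow>\<^sub>L 'a"
  shows "\<bar>a' \<bullet> L b' - a \<bullet> L b\<bar>
           \<le> norm (a' - a) * (norm L * norm b') + norm a * (norm L * norm (b' - b))"
proof -
  have "a' \<bullet> L b' - a \<bullet> L b = (a' - a) \<bullet> L b' + a \<bullet> L (b' - b)"
    by (simp add: inner_diff_left inner_diff_right blinfun.diff_right)
  moreover have "\<bar>u \<bullet> L v\<bar> \<le> norm u * (norm L * norm v)" for u v
    by (meson Cauchy_Schwarz_ineq2 mult_left_mono norm_blinfun norm_ge_zero order_trans)
  ultimately show ?thesis by (smt (verit))
qed

lemma mult_add_one_powr_le:
  fixes N s :: real
  assumes N: "N \<ge> 1" and s: "s \<le> 2"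
  shows "N * (N + 1) powr (s - 1) \<le> 4 * N powr s"
proof -
  have "N * (N + 1) powr (s - 1) \<le> (N + 1) * (N + 1) powr (s - 1)"
    by (rule mult_right_mono) auto
  also have "\<dots> = (N + 1) powr s"
    using N by (simp add: powr_add[symmetric] powr_mult_base)
  also have "\<dots> \<le> 4 * N powr s"
  proof (cases "s \<ge> 0")
    case True
    have "(N + 1) powr s \<le> (2 * N) powr s"
      by (rule powr_mono2) (use True N in auto)
    also have "\<dots> = 2 powr s * N powr s" by (simp add: powr_mult)
    also have "\<dots> \<le> 2 powr 2 * N powr s"
      using s by (intro mult_right_mono powr_mono) auto
    finally show ?thesis by simp
  next
    case False
    have "(N + 1) powr s \<le> N powr s"
      by (rule powr_mono2') (use False N in auto)
    also have "\<dots> \<le> 4 * N powr s" by simp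
    finally show ?thesis .
  qed
  finally show ?thesis .
qed

lemma hessian_form_near_diagonal:
  fixes G :: "'a::euclidean_space \<Rightarrow> 'a" and H :: "'a \<Rightarrow> ('a \<Rightarrow>\<^sub>L 'a)"
  assumes deriv: "\<And>q. (G has_derivative blinfun_apply (H q)) (at q)"
    and m: "1 < m" "m \<le> 2" and A: "A \<ge> 0"
    and bound: "\<And>q. norm (H q) \<le> A * (norm q + 1) powr (m - 2)"
    and q: "norm q \<ge> 1" and \<delta>: "0 \<le> \<delta>" "\<delta> \<le> 1 / 2"
    and x: "norm (x - q) \<le> \<delta> * norm q" and z: "norm (z - q) \<le> \<delta> * norm q"
  shows "\<bar>G x \<bullet> H q (G z) - G q \<bullet> H q (G q)\<bar>
           \<le> 24 * A\<^sup>2 * (norm (G 0) + A / (m - 1)) * \<delta> * norm q powr (3 * m - 4)"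
proof -
  define C where "C = norm (G 0) + A / (m - 1)"
  define N where "N = norm q"
  define P where "P = N + 1"
  have C0: "C \<ge> 0" using m A by (simp add: C_def)
  have P0: "P > 0" using q by (simp add: P_def N_def)
  have growth: "norm (G y) \<le> C * (norm y + 1) powr (m - 1)" for y
    unfolding C_def using growth_of_derivative_bound[OF deriv m(1) A bound] .
  have Lip: "norm (G y - G q) \<le> 2 * A * P powr (m - 2) * (\<delta> * N)" if "norm (y - q) \<le> \<delta> * N" for y
  proof -
    have "\<delta> * N \<le> N / 2" using \<delta> q mult_right_mono[of \<delta> "1 / 2" N] by (simp add: N_def)
    then have "norm (G y - G q) \<le> 2 * A * P powr (m - 2) * norm (y - q)"
      using lipschitz_near_of_derivative_bound[OF deriv A _ _ bound, of y q] m that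
      by (simp add: P_def N_def)
    also have "\<dots> \<le> 2 * A * P powr (m - 2) * (\<delta> * N)"
      using that A by (intro mult_left_mono) auto
    finally show ?thesis .
  qed
  have Hq: "norm (H q) \<le> A * P powr (m - 2)" using bound[of q] by (simp add: P_def N_def)
  have Gq: "norm (G q) \<le> C * P powr (m - 1)" using growth[of q] by (simp add: P_def N_def)
  have Gz: "norm (G z) \<le> C * (2 * P powr (m - 1))"
  proof -
    have "norm z + 1 \<le> 2 * P"
      using z \<delta> q norm_triangle_ineq2[of z q] mult_right_mono[of \<delta> 1 N]
      by (simp add: P_def N_def)
    then have "(norm z + 1) powr (m - 1) \<le> 2 powr (m - 1) * P powr (m - 1)"
      using m P0 by (simp add: powr_mult[symmetric] powr_mono2)
    also have "\<dots> \<le> 2 * P powr (m - 1)"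
      using m powr_mono[of "m - 1" 1 2] by (intro mult_right_mono) auto
    finally show ?thesis using growth[of z] C0 by (meson mult_left_mono order_trans)
  qed
  have "\<bar>G x \<bullet> H q (G z) - G q \<bullet> H q (G q)\<bar>
          \<le> norm (G x - G q) * (norm (H q) * norm (G z)) + norm (G q) * (norm (H q) * norm (G z - G q))"
    by (rule inner_blinfun_perturbation)
  also have "\<dots> \<le> (2 * A * P powr (m - 2) * (\<delta> * N)) * ((A * P powr (m - 2)) * (C * (2 * P powr (m - 1))))
               + (C * P powr (m - 1)) * ((A * P powr (m - 2)) * (2 * A * P powr (m - 2) * (\<delta> * N)))"
    using A C0 \<delta> Lip x z Hq Gq Gz by (intro add_mono mult_mono) (auto simp: N_def)
  also have "\<dots> = 6 * A\<^sup>2 * C * \<delta> * (N * (P powr (m - 2) * P powr (m - 2) * P powr (m - 1)))"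
    by (simp add: power2_eq_square algebra_simps)
  also have "P powr (m - 2) * P powr (m - 2) * P powr (m - 1) = P powr (3 * m - 4 - 1)"
    using P0 by (simp add: powr_add[symmetric])
  also have "6 * A\<^sup>2 * C * \<delta> * (N * P powr (3 * m - 4 - 1)) \<le> 6 * A\<^sup>2 * C * \<delta> * (4 * N powr (3 * m - 4))"
    using C0 \<delta> m q unfolding P_def N_def by (intro mult_left_mono mult_add_one_powr_le) auto
  finally show ?thesis by (simp add: C_def N_def)
qed

theorem lemma14:
  fixes U :: "'a::euclidean_space \<Rightarrow> real"
    and G :: "'a \<Rightarrow> 'a"
    and H :: "'a \<Rightarrow> ('a \<Rightarrow>\<^sub>L 'a)"
    and T :: "'a \<Rightarrow> ('a \<Rightarrow>\<^sub>L ('a \<Rightarrow>\<^sub>L 'a))"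
    and m A1 A2 R :: real
  assumes grad: "\<And>q. (U has_derivative (\<lambda>h. G q \<bullet> h)) (at q)"
    and hess: "\<And>q. (G has_derivative blinfun_apply (H q)) (at q)"
    and third: "\<And>q. (H has_derivative blinfun_apply (T q)) (at q)"
    and C3: "continuous_on UNIV T"
    and m: "1 < m" "m \<le> 2"
    and A1: "A1 \<ge> 0"
    and bound2: "\<And>q. norm (H q) \<le> A1 * (norm q + 1) powr (m - 2)"
    and bound3: "\<And>q. norm (T q) \<le> A1 * (norm q + 1) powr (m - 3)"
    and A2: "A2 > 0" and R: "R \<ge> 0"
    and lower: "\<And>q. norm q \<ge> R \<Longrightarrow> G q \<bullet> (H q (G q)) \<ge> A2 * norm q powr (3 * m - 4)"
  shows "\<exists>R0 \<delta> \<eta>. R0 \<ge> 0 \<and> \<delta> > 0 \<and> \<eta> > 0 \<and>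
           (\<forall>q x z. norm q \<ge> R0 \<and> max (norm (q - x)) (norm (q - z)) \<le> \<delta> * norm q \<longrightarrow>
              G x \<bullet> (H q (G z)) \<ge> \<eta> * norm q powr (3 * m - 4))"
proof -
  define K where "K = 48 * A1\<^sup>2 * (norm (G 0) + A1 / (m - 1))"
  define \<delta> where "\<delta> = min (1 / 2) (A2 / (K + 1))"
  have K0: "K \<ge> 0" using m A1 by (simp add: K_def)
  have \<delta>0: "\<delta> > 0" using A2 K0 by (simp add: \<delta>_def)
  have K\<delta>: "K * \<delta> \<le> A2"
    using A2 K0 by (simp add: \<delta>_def min_def field_simps)
  show ?thesis
  proof (intro exI conjI allI impI)
    fix q x z :: 'a
    assume a: "norm q \<ge> max R 1 \<and> max (norm (q - x)) (norm (q - z)) \<le> \<delta> * norm q"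
    moreover have "\<delta> \<le> 1 / 2" unfolding \<delta>_def by (rule min.cobounded1)
    ultimately have perturbation:
        "\<bar>G x \<bullet> H q (G z) - G q \<bullet> H q (G q)\<bar> \<le> K / 2 * \<delta> * norm q powr (3 * m - 4)"
      using hessian_form_near_diagonal[OF hess m A1 bound2, of q \<delta> x z] \<delta>0
      by (simp add: K_def norm_minus_commute mult.assoc)
    have "K / 2 * \<delta> * norm q powr (3 * m - 4) \<le> A2 / 2 * norm q powr (3 * m - 4)"
      using K\<delta> by (intro mult_right_mono) auto
    moreover have "A2 * norm q powr (3 * m - 4) \<le> G q \<bullet> H q (G q)"
      using lower a by simp
    ultimately show "G x \<bullet> H q (G z) \<ge> A2 / 2 * norm q powr (3 * m - 4)"
      using perturbation unfolding abs_le_iff by linarith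
  qed (use \<delta>0 A2 in auto)
qed

end
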